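(* Let $M\ge1$ and $b\ge1$ be integers and let $\tilde P_{\max}>0$, $\rho_a,\rho_q>0$, $\sigma_a^2,\sigma_q^2>0$. For nonnegative integers $n_a,n_q$ define $$\mathrm{MSE}(n_a,n_q)=M-M\Big(\frac{\rho_a n_a}{\rho_a n_a+\sigma_a^2}+\frac{2\rho_q n_q\sigma_a^4}{\pi(\rho_q+\sigma_q^2)(\alpha+\beta(n_a)\rho_q n_q)(\rho_a n_a+\sigma_a^2)^2}\Big),$$ where $\alpha=\frac{2}{\pi}\arccos\!\big(\frac{\rho_q}{\rho_q+\sigma_q^2}\big)$ and $\beta(n_a)=\frac{2}{\pi}\arcsin\!\big(\frac{\rho_q}{\rho_q+\sigma_q^2}\big)\frac{1}{\rho_q}-\frac{2\rho_a n_a}{\pi(\rho_q+\sigma_q^2)(\rho_a n_a+\sigma_a^2)}$. Consider the problem $$\min_{n_a,n_q}\ \mathrm{MSE}(n_a,n_q)\quad\text{s.t.}\quad 2^bMn_a+2Mn_q\le\tilde P_{\max},\ \ n_a,n_q\in\mathbb Z_+ .$$ Then this problem can be solved by a one-dimensional search over $n_a\in\{0,1,\dots,\lfloor \tilde P_{\max}/(2^bM)\rfloor\}$, where for each such $n_a$ one takes $n_q=\big\lfloor(\tilde P_{\max}-2^bMn_a)/(2M)\big\rfloor$; that is, the minimum of $\mathrm{MSE}(n_a,\lfloor(\tilde P_{\max}-2^bMn_a)/(2M)\rfloor)$ over these values of $n_a$ is attained at an optimal solution of the problem.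
   Context: $\mathbb Z_+$ denotes the set of nonnegative integers; $\lfloor\cdot\rfloor$ is the floor function. The function $\mathrm{MSE}(n_a,n_q)$ is the mean-squared error of the LMMSE estimator in a mixed-resolution linear Gaussian orthonormal measurement model with $Mn_a$ analog and $Mn_q$ 1-bit quantized measurements, and the constraint models a total ADC power budget with $b$-bit high-resolution ADCs. *)

theory Defs
  imports Complex_Main
begin

definition alpha_c :: "real \<Rightarrow> real \<Rightarrow> real" where
  "alpha_c \<rho>q \<sigma>q2 = 2 / pi * arccos (\<rho>q / (\<rho>q + \<sigma>q2))"

definition beta_c :: "real \<Rightarrow> real \<Rightarrow> real \<Rightarrow> real \<Rightarrow> nat \<Rightarrow> real" where
  "beta_c \<rho>a \<rho>q \<sigma>a2 \<sigma>q2 na =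
     2 / pi * arcsin (\<rho>q / (\<rho>q + \<sigma>q2)) * (1 / \<rho>q)
     - 2 * \<rho>a * real na / (pi * (\<rho>q + \<sigma>q2) * (\<rho>a * real na + \<sigma>a2))"

definition MSE :: "real \<Rightarrow> real \<Rightarrow> real \<Rightarrow> real \<Rightarrow> real \<Rightarrow> nat \<Rightarrow> nat \<Rightarrow> real" where
  "MSE M \<rho>a \<rho>q \<sigma>a2 \<sigma>q2 na nq =
     M - M * (\<rho>a * real na / (\<rho>a * real na + \<sigma>a2)
       + 2 * \<rho>q * real nq * \<sigma>a2 ^ 2 /
         (pi * (\<rho>q + \<sigma>q2) * (alpha_c \<rho>q \<sigma>q2 + beta_c \<rho>a \<rho>q \<sigma>a2 \<sigma>q2 na * \<rho>q * real nq)
            * (\<rho>a * real na + \<sigma>a2) ^ 2))"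

definition feasible :: "nat \<Rightarrow> nat \<Rightarrow> real \<Rightarrow> nat \<Rightarrow> nat \<Rightarrow> bool" where
  "feasible M b P na nq \<longleftrightarrow> 2 ^ b * real M * real na + 2 * real M * real nq \<le> P"

definition nq_of :: "nat \<Rightarrow> nat \<Rightarrow> real \<Rightarrow> nat \<Rightarrow> nat" where
  "nq_of M b P na = nat \<lfloor>(P - 2 ^ b * real M * real na) / (2 * real M)\<rfloor>"

definition na_max :: "nat \<Rightarrow> nat \<Rightarrow> real \<Rightarrow> nat" where
  "na_max M b P = nat \<lfloor>P / (2 ^ b * real M)\<rfloor>"

end

theory Submission
  imports Defs
begin

text \<open>For a fixed number of analog measurements the 1-bit contribution to the MSE has the form
  \<open>K n\<^sub>q / (\<alpha> + \<beta> \<rho>\<^sub>q n\<^sub>q)\<close> with \<open>K > 0\<close>, \<open>\<alpha> > 0\<close> and \<open>\<beta> \<ge> 0\<close>, the sign of \<open>\<beta>\<close> coming from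
  \<open>arcsin r \<ge> r\<close>. So the MSE is nonincreasing in \<open>n\<^sub>q\<close>, and since the feasible \<open>n\<^sub>q\<close> for given
  \<open>n\<^sub>a\<close> are exactly those up to \<open>\<lfloor>(P - 2\<^sup>b M n\<^sub>a) / (2M)\<rfloor>\<close>, the best choice of \<open>n\<^sub>q\<close> is always
  the largest feasible one.\<close>

lemma alpha_c_pos:
  assumes "\<rho>q > 0" "\<sigma>q2 > 0"
  shows "alpha_c \<rho>q \<sigma>q2 > 0"
proof -
  let ?r = "\<rho>q / (\<rho>q + \<sigma>q2)"
  have "0 < ?r" "?r < 1" using assms by (auto simp: field_simps)
  then have "arccos 1 < arccos ?r" by (intro arccos_less_arccos) auto
  then show ?thesis unfolding alpha_c_def by simp
qed

lemma beta_c_nonneg: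
  assumes "\<rho>a > 0" "\<rho>q > 0" "\<sigma>a2 > 0" "\<sigma>q2 > 0"
  shows "beta_c \<rho>a \<rho>q \<sigma>a2 \<sigma>q2 na \<ge> 0"
proof -
  let ?r = "\<rho>q / (\<rho>q + \<sigma>q2)"
  have "0 < ?r" "?r < 1" using assms by (auto simp: field_simps)
  then have r_le_arcsin: "?r \<le> arcsin ?r"
    using sin_x_le_x[of "arcsin ?r"] arcsin_nonneg[of ?r] by simp
  have ratio_le_1: "\<rho>a * real na / (\<rho>a * real na + \<sigma>a2) \<le> 1"
    using assms by (simp add: add_nonneg_pos divide_le_eq_1)
  have "2 * \<rho>a * real na / (pi * (\<rho>q + \<sigma>q2) * (\<rho>a * real na + \<sigma>a2))
      = 2 / pi * (1 / (\<rho>q + \<sigma>q2)) * (\<rho>a * real na / (\<rho>a * real na + \<sigma>a2))"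
    by (simp add: field_simps)
  also have "\<dots> \<le> 2 / pi * (1 / (\<rho>q + \<sigma>q2))"
    using mult_left_mono[OF ratio_le_1, of "2 / pi * (1 / (\<rho>q + \<sigma>q2))"] assms by simp
  also have "\<dots> = 2 / pi * ?r * (1 / \<rho>q)" using assms by (simp add: field_simps)
  also have "\<dots> \<le> 2 / pi * arcsin ?r * (1 / \<rho>q)"
    using r_le_arcsin assms by (intro mult_right_mono mult_left_mono) auto
  finally show ?thesis unfolding beta_c_def by simp
qed

lemma divide_affine_mono:
  fixes a c s t :: real
  assumes "a > 0" "c \<ge> 0" "0 \<le> s" "s \<le> t"
  shows "s / (a + c * s) \<le> t / (a + c * t)"
proof -
  have "a + c * s > 0" "a + c * t > 0" using assms by (auto intro: add_pos_nonneg)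
  moreover have "s * (a + c * t) \<le> t * (a + c * s)"
    using assms by (simp add: algebra_simps mult_left_mono)
  ultimately show ?thesis by (simp add: divide_simps)
qed

lemma MSE_antimono_nq:
  assumes "M \<ge> 0" "\<rho>a > 0" "\<rho>q > 0" "\<sigma>a2 > 0" "\<sigma>q2 > 0" "m \<le> n"
  shows "MSE M \<rho>a \<rho>q \<sigma>a2 \<sigma>q2 na n \<le> MSE M \<rho>a \<rho>q \<sigma>a2 \<sigma>q2 na m"
proof -
  define \<alpha> where "\<alpha> = alpha_c \<rho>q \<sigma>q2"
  define c where "c = beta_c \<rho>a \<rho>q \<sigma>a2 \<sigma>q2 na * \<rho>q"
  define K where "K = 2 * \<rho>q * \<sigma>a2 ^ 2 / (pi * (\<rho>q + \<sigma>q2) * (\<rho>a * real na + \<sigma>a2) ^ 2)"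
  have MSE_eq: "MSE M \<rho>a \<rho>q \<sigma>a2 \<sigma>q2 na k =
      M - M * (\<rho>a * real na / (\<rho>a * real na + \<sigma>a2) + K * (real k / (\<alpha> + c * real k)))" for k
    unfolding MSE_def \<alpha>_def c_def K_def by (simp add: field_simps)
  have "\<alpha> > 0" unfolding \<alpha>_def using alpha_c_pos assms by simp
  moreover have "c \<ge> 0" unfolding c_def using beta_c_nonneg assms by simp
  ultimately have "real m / (\<alpha> + c * real m) \<le> real n / (\<alpha> + c * real n)"
    using assms by (intro divide_affine_mono) auto
  moreover have "K \<ge> 0" unfolding K_def using assms by simp
  ultimately have "K * (real m / (\<alpha> + c * real m)) \<le> K * (real n / (\<alpha> + c * real n))"
    by (rule mult_left_mono)
  then have "M * (\<rho>a * real na / (\<rho>a * real na + \<sigma>a2) + K * (real m / (\<alpha> + c * real m)))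
      \<le> M * (\<rho>a * real na / (\<rho>a * real na + \<sigma>a2) + K * (real n / (\<alpha> + c * real n)))"
    using \<open>M \<ge> 0\<close> by (rule mult_left_mono[OF add_left_mono])
  then show ?thesis unfolding MSE_eq by linarith
qed

lemma le_nat_floor_iff:
  fixes x :: real
  assumes "0 \<le> x"
  shows "n \<le> nat \<lfloor>x\<rfloor> \<longleftrightarrow> real n \<le> x"
  using assms by (simp add: le_nat_iff le_floor_iff)

lemma feasible_iff:
  assumes "M \<ge> 1" "P \<ge> 0"
  shows "feasible M b P na nq \<longleftrightarrow> na \<le> na_max M b P \<and> nq \<le> nq_of M b P na"
proof -
  have na_max_iff: "na \<le> na_max M b P \<longleftrightarrow> 2 ^ b * real M * real na \<le> P"
    unfolding na_max_def using assms by (simp add: le_nat_floor_iff field_simps)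
  have nq_of_iff: "nq \<le> nq_of M b P na \<longleftrightarrow> 2 * real M * real nq \<le> P - 2 ^ b * real M * real na"
    if "2 ^ b * real M * real na \<le> P"
    unfolding nq_of_def using assms that by (simp add: le_nat_floor_iff field_simps)
  have "0 \<le> 2 * real M * real nq" by simp
  then show ?thesis
    unfolding feasible_def using na_max_iff nq_of_iff by (smt (verit))
qed

theorem proposition1:
  fixes M b :: nat and P \<rho>a \<rho>q \<sigma>a2 \<sigma>q2 :: real
  assumes "M \<ge> 1" "b \<ge> 1" "P > 0" "\<rho>a > 0" "\<rho>q > 0" "\<sigma>a2 > 0" "\<sigma>q2 > 0"
  defines "f \<equiv> \<lambda>na. MSE (real M) \<rho>a \<rho>q \<sigma>a2 \<sigma>q2 na (nq_of M b P na)"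
  shows "(\<exists>na\<le>na_max M b P. \<forall>na'\<le>na_max M b P. f na \<le> f na') \<and>
         (\<forall>na\<le>na_max M b P. (\<forall>na'\<le>na_max M b P. f na \<le> f na') \<longrightarrow>
            feasible M b P na (nq_of M b P na) \<and>
            (\<forall>ma mq. feasible M b P ma mq \<longrightarrow>
               f na \<le> MSE (real M) \<rho>a \<rho>q \<sigma>a2 \<sigma>q2 ma mq))"
proof (intro conjI allI impI)
  let ?N = "na_max M b P"
  have feasible: "feasible M b P ma mq \<longleftrightarrow> ma \<le> ?N \<and> mq \<le> nq_of M b P ma" for ma mq
    using feasible_iff assms by simp
  show "\<exists>na\<le>?N. \<forall>na'\<le>?N. f na \<le> f na'"
    using ex_is_arg_min_if_finite[of "{..?N}" f] by (auto simp: is_arg_min_linorder)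
  fix na assume "na \<le> ?N"
  then show "feasible M b P na (nq_of M b P na)" using feasible by simp
  fix ma mq
  assume na_min: "\<forall>na'\<le>?N. f na \<le> f na'" and "feasible M b P ma mq"
  then have "ma \<le> ?N" and mq_le: "mq \<le> nq_of M b P ma" using feasible by auto
  then have "f na \<le> f ma" using na_min by simp
  also have "f ma \<le> MSE (real M) \<rho>a \<rho>q \<sigma>a2 \<sigma>q2 ma mq"
    unfolding f_def using MSE_antimono_nq[OF _ _ _ _ _ mq_le] assms by simp
  finally show "f na \<le> MSE (real M) \<rho>a \<rho>q \<sigma>a2 \<sigma>q2 ma mq" .
qed

end
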